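(* Let $\Gamma\subset\mathbb{Z}^2$ be a finite convex domain. Let $\mathcal{H}_G^\Gamma=\{H\in\mathcal{H}_\mathbb{Q}^\Gamma : (\Delta_\Gamma H)|_{\partial\Gamma}\in\mathbb{Z}^{\partial\Gamma}\}/\mathcal{H}_\mathbb{Z}^\Gamma$. Then the map $H\mapsto[-\Delta_\Gamma H]$ is a well-defined group isomorphism $\mathcal{H}_G^\Gamma\cong G_\Gamma$. Equivalently, the sequence $$0\to G_\Gamma\to \mathcal{H}_\mathbb{Q}^\Gamma/\mathcal{H}_\mathbb{Z}^\Gamma\to(\mathbb{Q}/\mathbb{Z})^{\partial\Gamma}\to 0,$$ where the first map is the inverse of this isomorphism followed by the inclusion, and the second map sends $H$ to $(\Delta_\Gamma H)|_{\partial\Gamma}$ modulo $\mathbb{Z}^{\partial\Gamma}$, is exact.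
   Context: A set $\Gamma\subseteq\mathbb{Z}^2$ is a convex domain if $\Gamma=P\cap\mathbb{Z}^2$ for some convex open set $P\subseteq\mathbb{R}^2$. For finite $\Gamma$, consider the graph with vertices $\Gamma\cup\{s\}$ obtained from the nearest-neighbor graph $\mathbb{Z}^2$ by identifying all vertices outside $\Gamma$ to a sink $s$. The reduced Laplacian is $(\Delta_\Gamma f)(v)=\sum_{w\in\Gamma,\,w\sim v}f(w)-4f(v)$ for $f:\Gamma\to R$, $v\in\Gamma$. The sandpile group is $G_\Gamma=\mathbb{Z}^\Gamma/\Delta_\Gamma(\mathbb{Z}^\Gamma)$, with $[\cdot]$ the projection. The boundary $\partial\Gamma$ is the set of vertices of $\Gamma$ adjacent (in $\mathbb{Z}^2$) to some vertex outside $\Gamma$, and $\Gamma\setminus\partial\Gamma$ is the interior. For $R\in\{\mathbb{Z},\mathbb{Q},\mathbb{R}\}$, $\mathcal{H}_R^\Gamma$ is the module of functions $H:\Gamma\to R$ that are harmonic on $\Gamma$, i.e. $(\Delta_\Gamma H)(v)=0$ for all $v\in\Gamma\setminus\partial\Gamma$. *)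

theory Defs
  imports "HOL-Analysis.Analysis" "HOL-Algebra.Algebra"
begin

type_synonym vtx = "int \<times> int"

definition adj :: "vtx \<Rightarrow> vtx \<Rightarrow> bool" where
  "adj v w \<longleftrightarrow> \<bar>fst v - fst w\<bar> + \<bar>snd v - snd w\<bar> = 1"

definition convex_domain :: "vtx set \<Rightarrow> bool" where
  "convex_domain \<Gamma> \<longleftrightarrow> (\<exists>P :: (real \<times> real) set. convex P \<and> open P \<and>
      \<Gamma> = {v. (real_of_int (fst v), real_of_int (snd v)) \<in> P})"

definition boundary :: "vtx set \<Rightarrow> vtx set" where
  "boundary \<Gamma> = {v \<in> \<Gamma>. \<exists>w. adj v w \<and> w \<notin> \<Gamma>}"

text \<open>Functions on Gamma are represented as functions on Z^2 vanishing outside Gamma.\<close>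
definition funs_on :: "vtx set \<Rightarrow> (vtx \<Rightarrow> rat) set" where
  "funs_on \<Gamma> = {f. \<forall>v. v \<notin> \<Gamma> \<longrightarrow> f v = 0}"

definition int_funs_on :: "vtx set \<Rightarrow> (vtx \<Rightarrow> rat) set" where
  "int_funs_on \<Gamma> = {f \<in> funs_on \<Gamma>. \<forall>v. f v \<in> \<int>}"

definition lap :: "vtx set \<Rightarrow> (vtx \<Rightarrow> rat) \<Rightarrow> vtx \<Rightarrow> rat" where
  "lap \<Gamma> f v = (if v \<in> \<Gamma> then (\<Sum>w\<in>{w\<in>\<Gamma>. adj v w}. f w) - 4 * f v else 0)"

definition harmonic_Q :: "vtx set \<Rightarrow> (vtx \<Rightarrow> rat) set" where
  "harmonic_Q \<Gamma> = {H \<in> funs_on \<Gamma>. \<forall>v \<in> \<Gamma> - boundary \<Gamma>. lap \<Gamma> H v = 0}"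

definition harmonic_Z :: "vtx set \<Rightarrow> (vtx \<Rightarrow> rat) set" where
  "harmonic_Z \<Gamma> = harmonic_Q \<Gamma> \<inter> int_funs_on \<Gamma>"

definition harmonic_G_carrier :: "vtx set \<Rightarrow> (vtx \<Rightarrow> rat) set" where
  "harmonic_G_carrier \<Gamma> = {H \<in> harmonic_Q \<Gamma>. \<forall>v \<in> boundary \<Gamma>. lap \<Gamma> H v \<in> \<int>}"

definition fun_group :: "(vtx \<Rightarrow> rat) set \<Rightarrow> (vtx \<Rightarrow> rat) monoid" where
  "fun_group A = \<lparr>carrier = A, monoid.mult = (\<lambda>f g v. f v + g v), one = (\<lambda>v. 0)\<rparr>"

definition sandpile_group :: "vtx set \<Rightarrow> (vtx \<Rightarrow> rat) set monoid" where
  "sandpile_group \<Gamma> = fun_group (int_funs_on \<Gamma>) Mod (lap \<Gamma> ` int_funs_on \<Gamma>)"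

definition harmonic_G :: "vtx set \<Rightarrow> (vtx \<Rightarrow> rat) set monoid" where
  "harmonic_G \<Gamma> = fun_group (harmonic_G_carrier \<Gamma>) Mod harmonic_Z \<Gamma>"

end

(*
  On functions supported in the finite set \<Gamma> the reduced Laplacian is injective by a discrete
  maximum principle (at the rightmost point where such a function with vanishing Laplacian
  attains a positive maximum, the right neighbour is strictly smaller), hence bijective over Q.
  The map H \<mapsto> [-\<Delta>H] is a homomorphism onto the sandpile group.  Its kernel is the group of
  integral harmonic functions: if -\<Delta>H = \<Delta>f with f integral, injectivity gives H = -f.
  It is surjective: for integral g choose integral f with \<Delta>f = -g on the interior; the rational
  solution H of \<Delta>H = -(g + \<Delta>f) is harmonic with integral boundary Laplacian, and
  [-\<Delta>H] = [g + \<Delta>f] = [g].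
*)

theory Submission
  imports Defs "HOL-Library.Function_Algebras"
begin

lemma funs_on_outside: "f \<in> funs_on \<Gamma> \<Longrightarrow> v \<notin> \<Gamma> \<Longrightarrow> f v = 0"
  unfolding funs_on_def by blast

lemma int_funs_on_Ints: "f \<in> int_funs_on \<Gamma> \<Longrightarrow> f v \<in> \<int>"
  unfolding int_funs_on_def by blast

lemma adj_iff_neighbour:
  "adj v w \<longleftrightarrow> w \<in> {(fst v + 1, snd v), (fst v - 1, snd v), (fst v, snd v + 1), (fst v, snd v - 1)}"
  by (cases v, cases w) (auto simp: adj_def abs_if split: if_splits)

lemma lap_eq_neighbour_sum:
  assumes "f \<in> funs_on \<Gamma>" and "v \<in> \<Gamma>"
  shows "lap \<Gamma> f v =
    f (fst v + 1, snd v) + f (fst v - 1, snd v) + f (fst v, snd v + 1) + f (fst v, snd v - 1) - 4 * f v"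
proof -
  let ?N = "{(fst v + 1, snd v), (fst v - 1, snd v), (fst v, snd v + 1), (fst v, snd v - 1)}"
  have "(\<Sum>w\<in>{w\<in>\<Gamma>. adj v w}. f w) = (\<Sum>w\<in>?N. f w)"
    using assms(1) by (intro sum.mono_neutral_left) (auto simp: adj_iff_neighbour funs_on_def)
  also have "\<dots> = f (fst v + 1, snd v) + f (fst v - 1, snd v) + f (fst v, snd v + 1) + f (fst v, snd v - 1)"
    by (cases v) simp
  finally show ?thesis
    using assms(2) by (simp add: lap_def)
qed

lemma lap_outside: "v \<notin> \<Gamma> \<Longrightarrow> lap \<Gamma> f v = 0"
  by (simp add: lap_def)

lemma lap_zero: "lap \<Gamma> (\<lambda>_. 0) = (\<lambda>_. 0)"
  by (simp add: lap_def fun_eq_iff)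

lemma lap_add: "lap \<Gamma> (\<lambda>v. f v + g v) = (\<lambda>v. lap \<Gamma> f v + lap \<Gamma> g v)"
  by (auto simp: lap_def fun_eq_iff sum.distrib algebra_simps)

lemma lap_minus: "lap \<Gamma> (\<lambda>v. - f v) = (\<lambda>v. - lap \<Gamma> f v)"
  by (auto simp: lap_def fun_eq_iff sum_negf algebra_simps)

lemma lap_diff: "lap \<Gamma> (\<lambda>v. f v - g v) = (\<lambda>v. lap \<Gamma> f v - lap \<Gamma> g v)"
  by (auto simp: lap_def fun_eq_iff sum_subtractf algebra_simps)

lemma lap_scale: "lap \<Gamma> (\<lambda>v. c * f v) = (\<lambda>v. c * lap \<Gamma> f v)"
  by (auto simp: lap_def fun_eq_iff sum_distrib_left algebra_simps)

lemma lap_in_funs_on: "lap \<Gamma> f \<in> funs_on \<Gamma>"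
  by (simp add: funs_on_def lap_def)

lemma lap_in_int_funs_on: "f \<in> int_funs_on \<Gamma> \<Longrightarrow> lap \<Gamma> f \<in> int_funs_on \<Gamma>"
  by (auto simp: int_funs_on_def lap_in_funs_on lap_def intro!: Ints_sum Ints_diff Ints_mult)

section \<open>Discrete maximum principle\<close>

lemma lap_vanishing_imp_nonpos:
  assumes "finite \<Gamma>" and f: "f \<in> funs_on \<Gamma>" and harmonic: "\<forall>v\<in>\<Gamma>. lap \<Gamma> f v = 0"
  shows "f v \<le> 0"
proof (rule ccontr)
  assume "\<not> f v \<le> 0"
  with funs_on_outside[OF f, of v] have "v \<in> \<Gamma>" and "f v > 0"
    by force+
  define M where "M = Max (f ` \<Gamma>)"
  have "M \<ge> f v"
    using \<open>finite \<Gamma>\<close> \<open>v \<in> \<Gamma>\<close> by (simp add: M_def)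
  have le_M: "f w \<le> M" for w
    using \<open>finite \<Gamma>\<close> funs_on_outside[OF f, of w] \<open>f v > 0\<close> \<open>M \<ge> f v\<close>
    by (cases "w \<in> \<Gamma>") (auto simp: M_def)
  define A where "A = {w\<in>\<Gamma>. f w = M}"
  have "M \<in> f ` \<Gamma>"
    unfolding M_def using \<open>finite \<Gamma>\<close> \<open>v \<in> \<Gamma>\<close> by (intro Max_in) auto
  then have "A \<noteq> {}"
    unfolding A_def by blast
  have "finite A"
    using \<open>finite \<Gamma>\<close> by (simp add: A_def)
  then have "Max (fst ` A) \<in> fst ` A"
    using \<open>A \<noteq> {}\<close> by simp
  then obtain p where "p \<in> A" and "fst p = Max (fst ` A)"
    by auto
  with \<open>finite A\<close> have rightmost: "\<forall>w\<in>A. fst w \<le> fst p"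
    by simp
  have "f (fst p + 1, snd p) \<noteq> M"
  proof
    assume "f (fst p + 1, snd p) = M"
    moreover have "(fst p + 1, snd p) \<in> \<Gamma>"
    proof (rule ccontr)
      assume "(fst p + 1, snd p) \<notin> \<Gamma>"
      with funs_on_outside[OF f] \<open>f (fst p + 1, snd p) = M\<close> \<open>f v > 0\<close> \<open>M \<ge> f v\<close>
      show False
        by simp
    qed
    ultimately have "(fst p + 1, snd p) \<in> A"
      by (simp add: A_def)
    with rightmost show False
      by fastforce
  qed
  with le_M have "f (fst p + 1, snd p) < M"
    using order_less_le by blast
  moreover have "p \<in> \<Gamma>" and "f p = M"
    using \<open>p \<in> A\<close> by (auto simp: A_def)
  ultimately have "lap \<Gamma> f p < 0"
    using lap_eq_neighbour_sum[OF f \<open>p \<in> \<Gamma>\<close>]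
      le_M[of "(fst p - 1, snd p)"] le_M[of "(fst p, snd p + 1)"] le_M[of "(fst p, snd p - 1)"]
    by linarith
  with harmonic \<open>p \<in> \<Gamma>\<close> show False
    by simp
qed

lemma lap_vanishing_imp_zero:
  assumes "finite \<Gamma>" and "f \<in> funs_on \<Gamma>" and "\<forall>v\<in>\<Gamma>. lap \<Gamma> f v = 0"
  shows "f v = 0"
proof -
  have "(\<lambda>v. - f v) \<in> funs_on \<Gamma>" and "\<forall>v\<in>\<Gamma>. lap \<Gamma> (\<lambda>v. - f v) v = 0"
    using assms(2,3) by (simp_all add: funs_on_def lap_minus)
  then have "- f v \<le> 0"
    by (rule lap_vanishing_imp_nonpos[OF assms(1)])
  moreover have "f v \<le> 0"
    using lap_vanishing_imp_nonpos[OF assms] .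
  ultimately show ?thesis
    by simp
qed

lemma inj_on_lap:
  assumes "finite \<Gamma>"
  shows "inj_on (lap \<Gamma>) (funs_on \<Gamma>)"
proof (rule inj_onI)
  fix f g
  assume "f \<in> funs_on \<Gamma>" "g \<in> funs_on \<Gamma>" and "lap \<Gamma> f = lap \<Gamma> g"
  then have "(\<lambda>v. f v - g v) \<in> funs_on \<Gamma>" and "\<forall>v\<in>\<Gamma>. lap \<Gamma> (\<lambda>v. f v - g v) v = 0"
    by (simp_all add: funs_on_def lap_diff)
  then have "f v - g v = 0" for v
    by (rule lap_vanishing_imp_zero[OF assms])
  then show "f = g"
    by (simp add: fun_eq_iff)
qed

section \<open>Invertibility of the Laplacian over the rationals\<close>

definition fun_scale :: "'b::field \<Rightarrow> ('a \<Rightarrow> 'b) \<Rightarrow> 'a \<Rightarrow> 'b" where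
  "fun_scale c f = (\<lambda>v. c * f v)"

interpretation fun_vs: vector_space "fun_scale :: 'b::field \<Rightarrow> ('a \<Rightarrow> 'b) \<Rightarrow> 'a \<Rightarrow> 'b"
  by unfold_locales (simp_all add: fun_scale_def fun_eq_iff distrib_left distrib_right)

lemma sum_fun_apply: "(\<Sum>a\<in>A. g a) x = (\<Sum>a\<in>A. g a x)"
  by (induction A rule: infinite_finite_induct) auto

lemma (in vector_space) inj_on_span_imp_surj_on_span:
  assumes "Vector_Spaces.linear scale scale f" and "finite B"
    and into: "f ` span B \<subseteq> span B" and inj: "inj_on f (span B)"
  shows "f ` span B = span B"
proof -
  interpret f: Vector_Spaces.linear scale scale f by fact
  obtain C where "C \<subseteq> B" "independent C" "B \<subseteq> span C"
    using maximal_independent_subset by blast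
  then have span_C: "span C = span B"
    unfolding span_eq using span_superset[of B] by blast
  have "finite C"
    using \<open>C \<subseteq> B\<close> \<open>finite B\<close> finite_subset by blast
  have indep_fC: "independent (f ` C)"
    using \<open>independent C\<close> inj span_C by (intro f.independent_injective_image) simp_all
  have card_fC: "card (f ` C) = card C"
    using inj span_C span_superset[of C] by (intro card_image) (simp add: inj_on_subset)
  have fC_span: "f ` C \<subseteq> span C"
    using \<open>C \<subseteq> B\<close> into span_superset[of B] span_C by blast
  have "span C \<subseteq> span (f ` C)"
  proof
    fix b
    assume "b \<in> span C"
    show "b \<in> span (f ` C)"
    proof (rule ccontr)
      assume "b \<notin> span (f ` C)"
      then have "independent (insert b (f ` C))" and "b \<notin> f ` C"
        using indep_fC independent_insertI span_base by blast+
      moreover have "insert b (f ` C) \<subseteq> span C"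
        using \<open>b \<in> span C\<close> fC_span by blast
      ultimately have "card (insert b (f ` C)) \<le> card C"
        using independent_span_bound[OF \<open>finite C\<close>] by blast
      moreover have "card (insert b (f ` C)) = card C + 1"
        using \<open>b \<notin> f ` C\<close> \<open>finite C\<close> card_fC by simp
      ultimately show False
        by simp
    qed
  qed
  then have "span B \<subseteq> f ` span B"
    by (simp add: f.span_image span_C)
  with into show ?thesis
    by blast
qed

lemma linear_lap: "Vector_Spaces.linear fun_scale fun_scale (lap \<Gamma>)"
  unfolding Vector_Spaces.linear_iff using fun_vs.vector_space_axioms
  by (auto simp: plus_fun_def fun_scale_def lap_add lap_scale)

lemma indicator_in_funs_on: "u \<in> \<Gamma> \<Longrightarrow> indicator {u} \<in> funs_on \<Gamma>"
  unfolding funs_on_def by (auto simp: indicator_def)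

lemma funs_on_eq_span_indicators:
  assumes "finite \<Gamma>"
  shows "funs_on \<Gamma> = fun_vs.span ((\<lambda>u. indicator {u}) ` \<Gamma>)"
proof
  show "funs_on \<Gamma> \<subseteq> fun_vs.span ((\<lambda>u. indicator {u}) ` \<Gamma>)"
  proof
    fix f :: "vtx \<Rightarrow> rat"
    assume "f \<in> funs_on \<Gamma>"
    have "(\<Sum>u\<in>\<Gamma>. fun_scale (f u) (indicator {u})) v = f v" for v
    proof -
      have "(\<Sum>u\<in>\<Gamma>. fun_scale (f u) (indicator {u})) v = (\<Sum>u\<in>\<Gamma>. if u = v then f u else 0)"
        unfolding sum_fun_apply fun_scale_def by (rule sum.cong) simp_all
      also have "\<dots> = f v"
        using assms funs_on_outside[OF \<open>f \<in> funs_on \<Gamma>\<close>, of v] by simp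
      finally show ?thesis .
    qed
    then have "f = (\<Sum>u\<in>\<Gamma>. fun_scale (f u) (indicator {u}))"
      by (simp add: fun_eq_iff)
    also have "\<dots> \<in> fun_vs.span ((\<lambda>u. indicator {u}) ` \<Gamma>)"
      by (intro fun_vs.span_sum fun_vs.span_scale fun_vs.span_base imageI)
    finally show "f \<in> fun_vs.span ((\<lambda>u. indicator {u}) ` \<Gamma>)" .
  qed
  have "fun_vs.subspace (funs_on \<Gamma>)"
    unfolding fun_vs.subspace_def funs_on_def fun_scale_def by (simp add: zero_fun_def plus_fun_def)
  then show "fun_vs.span ((\<lambda>u. indicator {u}) ` \<Gamma>) \<subseteq> funs_on \<Gamma>"
    by (rule fun_vs.span_minimal[rotated]) (auto intro: indicator_in_funs_on)
qed

lemma lap_image_funs_on: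
  assumes "finite \<Gamma>"
  shows "lap \<Gamma> ` funs_on \<Gamma> = funs_on \<Gamma>"
  using lap_in_funs_on[of \<Gamma>] inj_on_lap[OF assms] unfolding funs_on_eq_span_indicators[OF assms]
  by (intro fun_vs.inj_on_span_imp_surj_on_span linear_lap) (auto simp: assms)

section \<open>Integral Laplacians on the interior\<close>

lemma lap_indicator_right_neighbour:
  assumes "(fst u + 1, snd u) \<in> \<Gamma>" and "v \<in> \<Gamma>" and "fst v \<le> fst u"
  shows "lap \<Gamma> (indicator {(fst u + 1, snd u)}) v = (if v = u then 1 else 0)"
  using lap_eq_neighbour_sum[OF indicator_in_funs_on[OF assms(1)] assms(2)] assms(3)
  by (auto simp: indicator_def prod_eq_iff)

lemma ex_int_fun_lap_eq_on_interior:
  assumes "finite \<Gamma>" and "\<And>v. t v \<in> \<int>"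
  shows "\<exists>f\<in>int_funs_on \<Gamma>. \<forall>v\<in>\<Gamma> - boundary \<Gamma>. lap \<Gamma> f v = t v"
proof -
  \<comment> \<open>Sweep the interior from left to right: adding the unit function at the right neighbour
    of u changes the Laplacian by 1 at u and nowhere weakly to the left of u.\<close>
  have "S \<subseteq> \<Gamma> - boundary \<Gamma> \<Longrightarrow> \<exists>f\<in>int_funs_on \<Gamma>. \<forall>v\<in>S. lap \<Gamma> f v = t v" if "finite S" for S
    using that
  proof (induction S rule: finite_ranking_induct[where f = fst])
    case empty
    have "(\<lambda>_. 0) \<in> int_funs_on \<Gamma>"
      by (simp add: int_funs_on_def funs_on_def)
    then show ?case
      by blast
  next
    case (insert u S)
    then obtain f where f: "f \<in> int_funs_on \<Gamma>" "\<forall>v\<in>S. lap \<Gamma> f v = t v"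
      by auto
    let ?q = "(fst u + 1, snd u)"
    have "u \<in> \<Gamma>" and "?q \<in> \<Gamma>"
      using insert.prems by (auto simp: boundary_def adj_def)
    define c where "c = t u - lap \<Gamma> f u"
    have "c \<in> \<int>"
      using assms(2) int_funs_on_Ints[OF lap_in_int_funs_on[OF f(1)]] by (simp add: c_def)
    define g where "g = (\<lambda>v. f v + c * indicator {?q} v)"
    have "g \<in> int_funs_on \<Gamma>"
      using f(1) \<open>c \<in> \<int>\<close> \<open>?q \<in> \<Gamma>\<close> by (auto simp: g_def int_funs_on_def funs_on_def indicator_def)
    moreover have "lap \<Gamma> g v = t v" if "v \<in> insert u S" for v
    proof -
      have "v \<in> \<Gamma>"
        using that insert.prems by auto
      moreover have "fst v \<le> fst u"
        using that insert.hyps(2)[of v] by auto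
      ultimately have "lap \<Gamma> g v = lap \<Gamma> f v + (if v = u then c else 0)"
        using lap_indicator_right_neighbour[OF \<open>?q \<in> \<Gamma>\<close>] by (simp add: g_def lap_add lap_scale)
      then show ?thesis
        using that f(2) by (auto simp: c_def)
    qed
    ultimately show ?case
      by blast
  qed
  moreover have "finite (\<Gamma> - boundary \<Gamma>)"
    using assms(1) by simp
  ultimately show ?thesis
    by blast
qed

section \<open>The isomorphism onto the sandpile group\<close>

lemma fun_group_simps [simp]:
  "carrier (fun_group A) = A"
  "x \<otimes>\<^bsub>fun_group A\<^esub> y = (\<lambda>v. x v + y v)"
  "\<one>\<^bsub>fun_group A\<^esub> = (\<lambda>_. 0)"
  by (simp_all add: fun_group_def)

definition additive_subgroup :: "('a \<Rightarrow> 'b::ab_group_add) set \<Rightarrow> bool" where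
  "additive_subgroup A \<longleftrightarrow>
    (\<lambda>_. 0) \<in> A \<and> (\<forall>f\<in>A. \<forall>g\<in>A. (\<lambda>v. f v + g v) \<in> A) \<and> (\<forall>f\<in>A. (\<lambda>v. - f v) \<in> A)"

lemma comm_group_fun_group:
  assumes "additive_subgroup A"
  shows "comm_group (fun_group A)"
proof (rule comm_groupI)
  fix f
  assume "f \<in> carrier (fun_group A)"
  with assms show "\<exists>g\<in>carrier (fun_group A). g \<otimes>\<^bsub>fun_group A\<^esub> f = \<one>\<^bsub>fun_group A\<^esub>"
    by (intro bexI[of _ "\<lambda>v. - f v"]) (simp_all add: additive_subgroup_def)
qed (use assms in \<open>auto simp: additive_subgroup_def algebra_simps\<close>)

lemma inv_fun_group:
  assumes "additive_subgroup A" and "f \<in> A"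
  shows "inv\<^bsub>fun_group A\<^esub> f = (\<lambda>v. - f v)"
proof -
  interpret comm_group "fun_group A"
    using assms(1) by (rule comm_group_fun_group)
  show ?thesis
    using assms by (intro inv_equality) (simp_all add: additive_subgroup_def)
qed

lemma subgroup_fun_group:
  assumes "additive_subgroup B" and "additive_subgroup A" and "B \<subseteq> A"
  shows "subgroup B (fun_group A)"
proof (rule subgroup.intro)
  show "inv\<^bsub>fun_group A\<^esub> f \<in> B" if "f \<in> B" for f
    using assms that by (simp add: inv_fun_group subsetD additive_subgroup_def)
qed (use assms in \<open>auto simp: additive_subgroup_def\<close>)

lemma additive_subgroup_int_funs_on: "additive_subgroup (int_funs_on \<Gamma>)"
  by (auto simp: additive_subgroup_def int_funs_on_def funs_on_def)

lemma additive_subgroup_harmonic_G_carrier: "additive_subgroup (harmonic_G_carrier \<Gamma>)"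
  by (auto simp: additive_subgroup_def harmonic_G_carrier_def harmonic_Q_def funs_on_def
      lap_zero lap_add lap_minus)

lemma additive_subgroup_lap_image:
  assumes "additive_subgroup A"
  shows "additive_subgroup (lap \<Gamma> ` A)"
  unfolding additive_subgroup_def
proof (intro conjI ballI)
  show "(\<lambda>_. 0) \<in> lap \<Gamma> ` A"
    using assms lap_zero by (metis additive_subgroup_def image_eqI)
next
  fix F G
  assume "F \<in> lap \<Gamma> ` A" "G \<in> lap \<Gamma> ` A"
  with assms show "(\<lambda>v. F v + G v) \<in> lap \<Gamma> ` A" "(\<lambda>v. - F v) \<in> lap \<Gamma> ` A"
    by (auto simp: additive_subgroup_def simp flip: lap_add lap_minus)
qed

definition sandpile_class :: "vtx set \<Rightarrow> (vtx \<Rightarrow> rat) \<Rightarrow> (vtx \<Rightarrow> rat) set" where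
  "sandpile_class \<Gamma> f = (lap \<Gamma> ` int_funs_on \<Gamma>) #>\<^bsub>fun_group (int_funs_on \<Gamma>)\<^esub> f"

lemma normal_lap_image: "lap \<Gamma> ` int_funs_on \<Gamma> \<lhd> fun_group (int_funs_on \<Gamma>)"
  using comm_group.subgroup_imp_normal[OF comm_group_fun_group] subgroup_fun_group
    additive_subgroup_lap_image additive_subgroup_int_funs_on lap_in_int_funs_on
  by blast

lemma group_sandpile_group: "group (sandpile_group \<Gamma>)"
  unfolding sandpile_group_def by (rule normal.factorgroup_is_group[OF normal_lap_image])

lemma carrier_sandpile_group: "carrier (sandpile_group \<Gamma>) = sandpile_class \<Gamma> ` int_funs_on \<Gamma>"
  by (simp add: sandpile_group_def sandpile_class_def carrier_FactGroup)

lemma sandpile_class_add: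
  assumes "f \<in> int_funs_on \<Gamma>" and "g \<in> int_funs_on \<Gamma>"
  shows "sandpile_class \<Gamma> (\<lambda>v. f v + g v) = sandpile_class \<Gamma> f \<otimes>\<^bsub>sandpile_group \<Gamma>\<^esub> sandpile_class \<Gamma> g"
  using normal.rcos_sum[OF normal_lap_image, of f \<Gamma> g] assms
  by (simp add: sandpile_group_def sandpile_class_def)

lemma sandpile_class_eq_one_iff:
  assumes "f \<in> int_funs_on \<Gamma>"
  shows "sandpile_class \<Gamma> f = \<one>\<^bsub>sandpile_group \<Gamma>\<^esub> \<longleftrightarrow> f \<in> lap \<Gamma> ` int_funs_on \<Gamma>"
proof -
  interpret N: normal "lap \<Gamma> ` int_funs_on \<Gamma>" "fun_group (int_funs_on \<Gamma>)"
    by (rule normal_lap_image)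
  show ?thesis
    using N.rcos_self[of f, OF _ N.subgroup_axioms] N.rcos_const[OF N.is_group, of f] assms
    by (auto simp: sandpile_group_def sandpile_class_def)
qed

lemma (in group_hom) FactGroup_iso_kernel_rcos:
  assumes "h ` carrier G = carrier H"
  shows "\<exists>\<phi>. \<phi> \<in> iso (G Mod kernel G H h) H \<and>
    (\<forall>x\<in>carrier G. \<phi> (kernel G H h #>\<^bsub>G\<^esub> x) = h x)"
proof (intro exI conjI ballI)
  show "(\<lambda>S. the_elem (h ` S)) \<in> iso (G Mod kernel G H h) H"
    using FactGroup_iso_set[OF assms] .
  fix x
  assume "x \<in> carrier G"
  show "the_elem (h ` (kernel G H h #>\<^bsub>G\<^esub> x)) = h x"
  proof (rule the_elem_image_unique)
    show "kernel G H h #>\<^bsub>G\<^esub> x \<noteq> {}"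
      using G.rcos_self[OF \<open>x \<in> carrier G\<close> subgroup_kernel] by blast
    fix y
    assume "y \<in> kernel G H h #>\<^bsub>G\<^esub> x"
    then obtain k where "k \<in> kernel G H h" and "y = k \<otimes>\<^bsub>G\<^esub> x"
      unfolding r_coset_def by blast
    with \<open>x \<in> carrier G\<close> show "h y = h x"
      by (simp add: kernel_def)
  qed
qed

definition harmonic_to_sandpile :: "vtx set \<Rightarrow> (vtx \<Rightarrow> rat) \<Rightarrow> (vtx \<Rightarrow> rat) set" where
  "harmonic_to_sandpile \<Gamma> H = sandpile_class \<Gamma> (\<lambda>v. - lap \<Gamma> H v)"

lemma neg_lap_in_int_funs_on:
  assumes "H \<in> harmonic_G_carrier \<Gamma>"
  shows "(\<lambda>v. - lap \<Gamma> H v) \<in> int_funs_on \<Gamma>"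
proof -
  have "lap \<Gamma> H v \<in> \<int>" for v
    using assms lap_outside[of v \<Gamma> H]
    by (cases "v \<in> boundary \<Gamma>"; cases "v \<in> \<Gamma>") (auto simp: harmonic_G_carrier_def harmonic_Q_def)
  then show ?thesis
    using lap_in_funs_on[of \<Gamma> H] by (simp add: int_funs_on_def funs_on_def)
qed

lemma group_hom_harmonic_to_sandpile:
  "group_hom (fun_group (harmonic_G_carrier \<Gamma>)) (sandpile_group \<Gamma>) (harmonic_to_sandpile \<Gamma>)"
proof (rule group_hom.intro)
  show "group (fun_group (harmonic_G_carrier \<Gamma>))"
    by (rule comm_group.axioms(2)[OF comm_group_fun_group[OF additive_subgroup_harmonic_G_carrier]])
  show "group (sandpile_group \<Gamma>)"
    by (rule group_sandpile_group)
  show "group_hom_axioms (fun_group (harmonic_G_carrier \<Gamma>)) (sandpile_group \<Gamma>) (harmonic_to_sandpile \<Gamma>)"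
  proof (unfold_locales, rule homI)
    show "harmonic_to_sandpile \<Gamma> H \<in> carrier (sandpile_group \<Gamma>)"
      if "H \<in> carrier (fun_group (harmonic_G_carrier \<Gamma>))" for H
      using that neg_lap_in_int_funs_on by (simp add: harmonic_to_sandpile_def carrier_sandpile_group)
    show "harmonic_to_sandpile \<Gamma> (H \<otimes>\<^bsub>fun_group (harmonic_G_carrier \<Gamma>)\<^esub> K) =
        harmonic_to_sandpile \<Gamma> H \<otimes>\<^bsub>sandpile_group \<Gamma>\<^esub> harmonic_to_sandpile \<Gamma> K"
      if "H \<in> carrier (fun_group (harmonic_G_carrier \<Gamma>))" "K \<in> carrier (fun_group (harmonic_G_carrier \<Gamma>))"
      for H K
      using that sandpile_class_add[OF neg_lap_in_int_funs_on neg_lap_in_int_funs_on]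
      by (simp add: harmonic_to_sandpile_def lap_add)
  qed
qed

lemma harmonic_to_sandpile_eq_one_iff:
  assumes "finite \<Gamma>" and "H \<in> harmonic_G_carrier \<Gamma>"
  shows "harmonic_to_sandpile \<Gamma> H = \<one>\<^bsub>sandpile_group \<Gamma>\<^esub> \<longleftrightarrow> H \<in> harmonic_Z \<Gamma>"
proof -
  have "H \<in> funs_on \<Gamma>"
    using assms(2) by (simp add: harmonic_G_carrier_def harmonic_Q_def)
  have "(\<lambda>v. - lap \<Gamma> H v) \<in> lap \<Gamma> ` int_funs_on \<Gamma> \<longleftrightarrow> H \<in> int_funs_on \<Gamma>"
  proof
    assume "(\<lambda>v. - lap \<Gamma> H v) \<in> lap \<Gamma> ` int_funs_on \<Gamma>"
    then obtain f where "f \<in> int_funs_on \<Gamma>" and f_eq: "(\<lambda>v. - lap \<Gamma> H v) = lap \<Gamma> f"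
      by blast
    then have "lap \<Gamma> H = lap \<Gamma> (\<lambda>v. - f v)"
      by (simp add: lap_minus flip: f_eq)
    moreover have "(\<lambda>v. - f v) \<in> int_funs_on \<Gamma>"
      using \<open>f \<in> int_funs_on \<Gamma>\<close> additive_subgroup_int_funs_on by (simp add: additive_subgroup_def)
    ultimately have "H = (\<lambda>v. - f v)"
      using inj_on_lap[OF assms(1)] \<open>H \<in> funs_on \<Gamma>\<close> by (auto simp: int_funs_on_def dest: inj_onD)
    with \<open>(\<lambda>v. - f v) \<in> int_funs_on \<Gamma>\<close> show "H \<in> int_funs_on \<Gamma>"
      by simp
  next
    assume "H \<in> int_funs_on \<Gamma>"
    then have "(\<lambda>v. - H v) \<in> int_funs_on \<Gamma>"
      using additive_subgroup_int_funs_on by (simp add: additive_subgroup_def)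
    then show "(\<lambda>v. - lap \<Gamma> H v) \<in> lap \<Gamma> ` int_funs_on \<Gamma>"
      by (rule image_eqI[rotated]) (simp add: lap_minus)
  qed
  then show ?thesis
    using assms(2) sandpile_class_eq_one_iff[OF neg_lap_in_int_funs_on[OF assms(2)]]
    by (simp add: harmonic_to_sandpile_def harmonic_Z_def harmonic_G_carrier_def)
qed

lemma kernel_harmonic_to_sandpile:
  assumes "finite \<Gamma>"
  shows "kernel (fun_group (harmonic_G_carrier \<Gamma>)) (sandpile_group \<Gamma>) (harmonic_to_sandpile \<Gamma>) = harmonic_Z \<Gamma>"
proof -
  have "harmonic_Z \<Gamma> \<subseteq> harmonic_G_carrier \<Gamma>"
    using int_funs_on_Ints[OF lap_in_int_funs_on] by (auto simp: harmonic_Z_def harmonic_G_carrier_def)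
  then show ?thesis
    unfolding kernel_def fun_group_simps using harmonic_to_sandpile_eq_one_iff[OF assms] by blast
qed

lemma harmonic_to_sandpile_surj:
  assumes "finite \<Gamma>"
  shows "harmonic_to_sandpile \<Gamma> ` harmonic_G_carrier \<Gamma> = carrier (sandpile_group \<Gamma>)"
proof
  show "harmonic_to_sandpile \<Gamma> ` harmonic_G_carrier \<Gamma> \<subseteq> carrier (sandpile_group \<Gamma>)"
    using group_hom.hom_closed[OF group_hom_harmonic_to_sandpile] by auto
  show "carrier (sandpile_group \<Gamma>) \<subseteq> harmonic_to_sandpile \<Gamma> ` harmonic_G_carrier \<Gamma>"
  proof
    fix Y
    assume "Y \<in> carrier (sandpile_group \<Gamma>)"
    then obtain g where "g \<in> int_funs_on \<Gamma>" and Y: "Y = sandpile_class \<Gamma> g"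
      by (auto simp: carrier_sandpile_group)
    obtain f where f: "f \<in> int_funs_on \<Gamma>" "\<forall>v\<in>\<Gamma> - boundary \<Gamma>. lap \<Gamma> f v = - g v"
      using ex_int_fun_lap_eq_on_interior[OF assms, of "\<lambda>v. - g v"] int_funs_on_Ints[OF \<open>g \<in> int_funs_on \<Gamma>\<close>]
      by auto
    define b where "b = (\<lambda>v. - (g v + lap \<Gamma> f v))"
    have "b \<in> int_funs_on \<Gamma>"
      using \<open>g \<in> int_funs_on \<Gamma>\<close> lap_in_int_funs_on[OF f(1)]
      by (auto simp: b_def int_funs_on_def funs_on_def)
    then have "b \<in> lap \<Gamma> ` funs_on \<Gamma>"
      using lap_image_funs_on[OF assms] by (simp add: int_funs_on_def)
    then obtain H where "H \<in> funs_on \<Gamma>" and "lap \<Gamma> H = b"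
      by blast
    then have "H \<in> harmonic_G_carrier \<Gamma>"
      using f(2) int_funs_on_Ints[OF \<open>b \<in> int_funs_on \<Gamma>\<close>]
      by (auto simp: harmonic_G_carrier_def harmonic_Q_def b_def)
    moreover have "harmonic_to_sandpile \<Gamma> H = Y"
    proof -
      have "harmonic_to_sandpile \<Gamma> H = sandpile_class \<Gamma> (lap \<Gamma> f) \<otimes>\<^bsub>sandpile_group \<Gamma>\<^esub> Y"
        using sandpile_class_add[OF lap_in_int_funs_on[OF f(1)] \<open>g \<in> int_funs_on \<Gamma>\<close>]
        by (simp add: harmonic_to_sandpile_def \<open>lap \<Gamma> H = b\<close> b_def Y add.commute)
      also have "sandpile_class \<Gamma> (lap \<Gamma> f) = \<one>\<^bsub>sandpile_group \<Gamma>\<^esub>"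
        using sandpile_class_eq_one_iff[OF lap_in_int_funs_on[OF f(1)]] f(1) by blast
      finally show ?thesis
        using \<open>Y \<in> carrier (sandpile_group \<Gamma>)\<close> monoid.l_one[OF group.is_monoid[OF group_sandpile_group]] by simp
    qed
    ultimately show "Y \<in> harmonic_to_sandpile \<Gamma> ` harmonic_G_carrier \<Gamma>"
      by blast
  qed
qed

theorem lemma1:
  fixes \<Gamma> :: "(int \<times> int) set"
  assumes "finite \<Gamma>" and "convex_domain \<Gamma>"
  shows "(\<forall>H \<in> harmonic_G_carrier \<Gamma>. (\<lambda>v. - lap \<Gamma> H v) \<in> int_funs_on \<Gamma>) \<and>
    (\<exists>\<phi>. \<phi> \<in> iso (harmonic_G \<Gamma>) (sandpile_group \<Gamma>) \<and>
      (\<forall>H \<in> harmonic_G_carrier \<Gamma>.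
         \<phi> (harmonic_Z \<Gamma> #>\<^bsub>fun_group (harmonic_G_carrier \<Gamma>)\<^esub> H) =
         (lap \<Gamma> ` int_funs_on \<Gamma>) #>\<^bsub>fun_group (int_funs_on \<Gamma>)\<^esub> (\<lambda>v. - lap \<Gamma> H v)))"
proof -
  interpret group_hom "fun_group (harmonic_G_carrier \<Gamma>)" "sandpile_group \<Gamma>" "harmonic_to_sandpile \<Gamma>"
    by (rule group_hom_harmonic_to_sandpile)
  have "harmonic_to_sandpile \<Gamma> ` carrier (fun_group (harmonic_G_carrier \<Gamma>)) = carrier (sandpile_group \<Gamma>)"
    using harmonic_to_sandpile_surj[OF assms(1)] by simp
  from FactGroup_iso_kernel_rcos[OF this] obtain \<phi>
    where "\<phi> \<in> iso (harmonic_G \<Gamma>) (sandpile_group \<Gamma>)"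
      and "\<forall>H\<in>harmonic_G_carrier \<Gamma>.
        \<phi> (harmonic_Z \<Gamma> #>\<^bsub>fun_group (harmonic_G_carrier \<Gamma>)\<^esub> H) = harmonic_to_sandpile \<Gamma> H"
    unfolding kernel_harmonic_to_sandpile[OF assms(1)] harmonic_G_def fun_group_simps by blast
  then show ?thesis
    using neg_lap_in_int_funs_on unfolding harmonic_to_sandpile_def sandpile_class_def by blast
qed

end
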